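(* Let $n\ge3$, $\varepsilon\ge0$, let $\mathcal{M}\subseteq\{1,\dots,n\}$ be a sample set that is a union of twin samples (pairs $\{i,i+1\}$) and contains $1$ and $n$, let $A=\mathbf{I}_{\mathcal{M}}$ and $y\in\mathbb{R}^{|\mathcal{M}|}$. If $z^\star\in\mathbb{R}^n$ is an optimal solution of $\min_{z}\|Dz\|_1$ subject to $\|Az-y\|_\infty\le\varepsilon$, then $z^\star$ is sign consistent with respect to $\mathcal{M}$.
   Context: $D\in\mathbb{R}^{(n-2)\times n}$ is the second-order difference operator, $(Dz)_k=z_k-2z_{k+1}+z_{k+2}$; $\mathbf{I}_{\mathcal{M}}$ consists of the rows of the identity indexed by $\mathcal{M}$, so $Az=z_{\mathcal{M}}$. For $k\in\{2,\dots,n-1\}$ let $s_k=\mathrm{sign}(z_{k-1}-2z_k+z_{k+1})$ (with $\mathrm{sign}(0)=0$). A profile $z$ is sign consistent (with respect to $\mathcal{M}$) if for any two consecutive samples $i<j$ in $\mathcal{M}$ (no element of $\mathcal{M}$ strictly between them) one of the following holds: (i) for all $k,h$ with $i\le k,h\le j$ (for which $s_k,s_h$ are defined), $s_k\ne0$ and $s_h\ne0$ imply $s_k=s_h$; (ii) $s_k=0$ for every $k$ with $i<k<j$. *)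

theory Defs
  imports Complex_Main
begin

text \<open>Vectors in R^n are functions nat => real, only indices 1..n are relevant.\<close>

definition second_diff :: "(nat \<Rightarrow> real) \<Rightarrow> nat \<Rightarrow> real" where
  "second_diff z k = z k - 2 * z (k + 1) + z (k + 2)"

definition D_l1 :: "nat \<Rightarrow> (nat \<Rightarrow> real) \<Rightarrow> real" where
  "D_l1 n z = (\<Sum>k=1..n-2. \<bar>second_diff z k\<bar>)"

text \<open>Feasibility: sup-norm of A z - y at most eps, A selecting the rows in M;
  y is indexed by the elements of M.\<close>
definition feasible :: "nat set \<Rightarrow> (nat \<Rightarrow> real) \<Rightarrow> real \<Rightarrow> (nat \<Rightarrow> real) \<Rightarrow> bool" where
  "feasible M y eps z \<longleftrightarrow> (\<forall>i\<in>M. \<bar>z i - y i\<bar> \<le> eps)"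

definition optimal :: "nat \<Rightarrow> nat set \<Rightarrow> (nat \<Rightarrow> real) \<Rightarrow> real \<Rightarrow> (nat \<Rightarrow> real) \<Rightarrow> bool" where
  "optimal n M y eps z \<longleftrightarrow> feasible M y eps z \<and>
     (\<forall>w. feasible M y eps w \<longrightarrow> D_l1 n z \<le> D_l1 n w)"

text \<open>s_k = sign(z_{k-1} - 2 z_k + z_{k+1}), meaningful for 2 <= k <= n-1.\<close>
definition sgn_curv :: "(nat \<Rightarrow> real) \<Rightarrow> nat \<Rightarrow> real" where
  "sgn_curv z k = sgn (z (k - 1) - 2 * z k + z (k + 1))"

definition union_of_twins :: "nat \<Rightarrow> nat set \<Rightarrow> bool" where
  "union_of_twins n M \<longleftrightarrow> (\<exists>T \<subseteq> {1..n-1}. M = (\<Union>i\<in>T. {i, i + 1}))"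

definition consecutive_in :: "nat set \<Rightarrow> nat \<Rightarrow> nat \<Rightarrow> bool" where
  "consecutive_in M i j \<longleftrightarrow> i \<in> M \<and> j \<in> M \<and> i < j \<and> (\<forall>m\<in>M. \<not> (i < m \<and> m < j))"

definition sign_consistent :: "nat \<Rightarrow> nat set \<Rightarrow> (nat \<Rightarrow> real) \<Rightarrow> bool" where
  "sign_consistent n M z \<longleftrightarrow>
    (\<forall>i j. consecutive_in M i j \<longrightarrow>
      ((\<forall>k h. i \<le> k \<and> k \<le> j \<and> i \<le> h \<and> h \<le> j \<and>
               2 \<le> k \<and> k \<le> n - 1 \<and> 2 \<le> h \<and> h \<le> n - 1 \<and>
               sgn_curv z k \<noteq> 0 \<and> sgn_curv z h \<noteq> 0 \<longrightarrow> sgn_curv z k = sgn_curv z h)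
       \<or> (\<forall>k. i < k \<and> k < j \<longrightarrow> sgn_curv z k = 0)))"

end

theory Submission
  imports Defs
begin

text \<open>Replace an optimal profile between two consecutive samples \<open>i < j\<close> by its chord. Sample
  points are untouched, so the chord is feasible, and only the second differences at
  \<open>i - 1, \<dots>, j - 1\<close> change; twin sampling guarantees that these all lie inside \<open>1..n-2\<close>.
  In terms of the slopes \<open>x\<^sub>m = z\<^sub>m\<^sub>+\<^sub>1 - z\<^sub>m\<close> the chord replaces \<open>x\<^sub>i, \<dots>, x\<^sub>j\<^sub>-\<^sub>1\<close> by their
  mean \<open>c\<close>, so optimality bounds the variation of \<open>x\<^sub>i\<^sub>-\<^sub>1, \<dots>, x\<^sub>j\<close> by \<open>|c - x\<^sub>i\<^sub>-\<^sub>1| + |x\<^sub>j - c|\<close>.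
  That is only possible if the slopes are monotone there or the middle slopes are all
  equal to \<open>c\<close>, i.e. if the curvature signs are consistent or all zero.\<close>

definition slope :: "(nat \<Rightarrow> real) \<Rightarrow> nat \<Rightarrow> real" where
  "slope z m = z (Suc m) - z m"

lemma second_diff_eq_slope_diff: "second_diff z k = slope z (Suc k) - slope z k"
  by (simp add: second_diff_def slope_def numeral_2_eq_2)

lemma sgn_curv_eq_sgn_slope_diff:
  assumes "1 \<le> k"
  shows "sgn_curv z k = sgn (slope z k - slope z (k - 1))"
proof -
  obtain k' where "k = Suc k'" using assms by (cases k) auto
  then show ?thesis by (simp add: sgn_curv_def slope_def algebra_simps)
qed

lemma sum_slope: "i \<le> j \<Longrightarrow> (\<Sum>m\<in>{i..<j}. slope z m) = z j - z i"
  unfolding slope_def by (rule sum_Suc_diff')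

lemma abs_diff_le_variation:
  fixes x :: "nat \<Rightarrow> real"
  assumes "p \<le> r"
  shows "\<bar>x r - x p\<bar> \<le> (\<Sum>k\<in>{p..<r}. \<bar>x (Suc k) - x k\<bar>)"
  using sum_abs[of "\<lambda>k. x (Suc k) - x k" "{p..<r}"] sum_Suc_diff'[OF assms, of x] by simp

lemma abs_diff_add_abs_diff_le_variation:
  fixes x :: "nat \<Rightarrow> real"
  assumes "p \<le> r" "r \<le> q"
  shows "\<bar>x r - x p\<bar> + \<bar>x q - x r\<bar> \<le> (\<Sum>k\<in>{p..<q}. \<bar>x (Suc k) - x k\<bar>)"
  using sum.atLeastLessThan_concat[OF assms, of "\<lambda>k. \<bar>x (Suc k) - x k\<bar>"]
    abs_diff_le_variation[OF assms(1), of x] abs_diff_le_variation[OF assms(2), of x]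
  by linarith

lemma abs_sum_less_sum_abs_if_mixed_signs:
  fixes d :: "'a \<Rightarrow> real"
  assumes "finite S" "k \<in> S" "h \<in> S" "d k > 0" "d h < 0"
  shows "\<bar>\<Sum>t\<in>S. d t\<bar> < (\<Sum>t\<in>S. \<bar>d t\<bar>)"
proof -
  have "\<bar>d h\<bar> - d h \<le> (\<Sum>t\<in>S. \<bar>d t\<bar> - d t)"
    by (rule member_le_sum) (use assms in auto)
  moreover have "\<bar>d k\<bar> + d k \<le> (\<Sum>t\<in>S. \<bar>d t\<bar> + d t)"
    by (rule member_le_sum) (use assms in auto)
  ultimately show ?thesis
    using assms by (auto simp: sum_subtractf sum.distrib abs_if split: if_splits)
qed

lemma exists_above_and_below_mean:
  fixes x :: "'a \<Rightarrow> real"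
  assumes "finite A" "(\<Sum>m\<in>A. x m) = real (card A) * c" "m \<in> A" "x m \<noteq> c"
  shows "\<exists>r\<in>A. c < x r" "\<exists>r\<in>A. x r < c"
proof -
  have zero: "(\<Sum>r\<in>A. x r - c) = 0"
    using assms(2) by (simp add: sum_subtractf)
  show "\<exists>r\<in>A. c < x r"
  proof (rule ccontr)
    assume "\<not> ?thesis"
    then have "\<forall>r\<in>A. c - x r = 0"
      using zero sum_nonneg_eq_0_iff[OF assms(1), of "\<lambda>r. c - x r"]
      by (simp add: sum_subtractf not_less)
    then show False using assms by auto
  qed
  show "\<exists>r\<in>A. x r < c"
  proof (rule ccontr)
    assume "\<not> ?thesis"
    then have "\<forall>r\<in>A. x r - c = 0"
      using zero sum_nonneg_eq_0_iff[OF assms(1), of "\<lambda>r. x r - c"] by (simp add: not_less)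
    then show False using assms by auto
  qed
qed

text \<open>The bound in \<open>variation\<close> is the variation of \<open>x\<^sub>p, c, \<dots>, c, x\<^sub>q\<close>.\<close>
lemma monotone_or_constant_if_variation_le:
  fixes x :: "nat \<Rightarrow> real"
  assumes "Suc p < q"
    and mean: "(\<Sum>m\<in>{Suc p..<q}. x m) = real (q - Suc p) * c"
    and variation: "(\<Sum>k\<in>{p..<q}. \<bar>x (Suc k) - x k\<bar>) \<le> \<bar>c - x p\<bar> + \<bar>x q - c\<bar>"
  shows "(\<forall>k\<in>{p..<q}. \<forall>h\<in>{p..<q}. \<not> (x k < x (Suc k) \<and> x (Suc h) < x h))
         \<or> (\<forall>m\<in>{Suc p..<q}. x m = c)"
proof (rule ccontr)
  assume "\<not> ?thesis"
  then obtain k h m where kh: "k \<in> {p..<q}" "h \<in> {p..<q}" "x k < x (Suc k)" "x (Suc h) < x h"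
    and m: "m \<in> {Suc p..<q}" "x m \<noteq> c" by blast
  define V where "V = (\<Sum>k\<in>{p..<q}. \<bar>x (Suc k) - x k\<bar>)"
  have "\<bar>x q - x p\<bar> < V"
    using abs_sum_less_sum_abs_if_mixed_signs[of "{p..<q}" k h "\<lambda>k. x (Suc k) - x k"] kh
      sum_Suc_diff'[of p q x] \<open>Suc p < q\<close>
    unfolding V_def by simp
  moreover obtain r r' where "r \<in> {Suc p..<q}" "c < x r" "r' \<in> {Suc p..<q}" "x r' < c"
    using exists_above_and_below_mean[of "{Suc p..<q}" x c m] mean m by auto
  then have "\<bar>x r - x p\<bar> + \<bar>x q - x r\<bar> \<le> V" "\<bar>x r' - x p\<bar> + \<bar>x q - x r'\<bar> \<le> V"
    unfolding V_def by (auto intro: abs_diff_add_abs_diff_le_variation)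
  ultimately have "\<bar>c - x p\<bar> + \<bar>x q - c\<bar> < V"
    using \<open>c < x r\<close> \<open>x r' < c\<close> by (auto simp: abs_if split: if_splits)
  then show False using variation unfolding V_def by simp
qed

definition chord :: "(nat \<Rightarrow> real) \<Rightarrow> nat \<Rightarrow> nat \<Rightarrow> nat \<Rightarrow> real" where
  "chord z i j m =
     (if i \<le> m \<and> m \<le> j then z i + (real m - real i) * (z j - z i) / (real j - real i) else z m)"

lemma chord_eq_outside:
  assumes "i < j" "m \<le> i \<or> j \<le> m"
  shows "chord z i j m = z m"
  using assms by (auto simp: chord_def)

lemma slope_chord_inside:
  assumes "i \<le> m" "m < j"
  shows "slope (chord z i j) m = (z j - z i) / (real j - real i)"
  using assms by (simp add: chord_def slope_def diff_divide_distrib[symmetric] algebra_simps)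

lemma slope_chord_outside:
  assumes "i < j" "m < i \<or> j \<le> m"
  shows "slope (chord z i j) m = slope z m"
  using assms by (auto simp: slope_def chord_eq_outside)

lemma variation_chord:
  fixes z :: "nat \<Rightarrow> real"
  assumes "1 \<le> i" "i < j"
  defines "c \<equiv> (z j - z i) / (real j - real i)"
  shows "(\<Sum>k\<in>{i-1..<j}. \<bar>second_diff (chord z i j) k\<bar>) = \<bar>c - slope z (i-1)\<bar> + \<bar>slope z j - c\<bar>"
proof -
  let ?s = "slope (chord z i j)"
  have "(\<Sum>k\<in>{i-1..<j}. \<bar>?s (Suc k) - ?s k\<bar>)
      = \<bar>?s i - ?s (i-1)\<bar> + (\<Sum>k\<in>{i..<j-1}. \<bar>?s (Suc k) - ?s k\<bar>) + \<bar>?s j - ?s (j-1)\<bar>"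
  proof -
    obtain a b where "i = Suc a" "j = Suc b" "a < b" using assms(1,2) by (cases i; cases j) auto
    then show ?thesis
      using sum.atLeastLessThan_Suc[of a b] sum.atLeast_Suc_lessThan[of a b] by simp
  qed
  also have "(\<Sum>k\<in>{i..<j-1}. \<bar>?s (Suc k) - ?s k\<bar>) = 0"
  proof (intro sum.neutral ballI)
    fix k assume "k \<in> {i..<j-1}"
    then have "i \<le> k" "Suc k < j" by auto
    then show "\<bar>?s (Suc k) - ?s k\<bar> = 0" by (simp add: slope_chord_inside)
  qed
  finally show ?thesis
    using assms by (simp add: second_diff_eq_slope_diff slope_chord_inside slope_chord_outside)
qed

lemma local_variation_le_if_D_l1_le:
  assumes "D_l1 n z \<le> D_l1 n w" "S \<subseteq> {1..n-2}"
    and "\<forall>k\<in>{1..n-2} - S. second_diff w k = second_diff z k"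
  shows "(\<Sum>k\<in>S. \<bar>second_diff z k\<bar>) \<le> (\<Sum>k\<in>S. \<bar>second_diff w k\<bar>)"
proof -
  have split: "D_l1 n f = (\<Sum>k\<in>{1..n-2} - S. \<bar>second_diff f k\<bar>) + (\<Sum>k\<in>S. \<bar>second_diff f k\<bar>)"
    for f
    unfolding D_l1_def using sum.subset_diff[OF assms(2)] by simp
  have "(\<Sum>k\<in>{1..n-2} - S. \<bar>second_diff w k\<bar>) = (\<Sum>k\<in>{1..n-2} - S. \<bar>second_diff z k\<bar>)"
    using assms(3) by (intro sum.cong) auto
  then show ?thesis using assms(1) split[of z] split[of w] by linarith
qed

lemma consecutive_twin_samples_interior:
  assumes "union_of_twins n M" "consecutive_in M i j" "i + 2 \<le> j"
  shows "2 \<le> i" "j \<le> n - 1"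
proof -
  obtain T where T: "T \<subseteq> {1..n-1}" "M = (\<Union>t\<in>T. {t, t+1})"
    using assms(1) unfolding union_of_twins_def by auto
  have gap: "Suc i \<notin> M" "j - 1 \<notin> M"
    using assms(2,3) by (auto simp: consecutive_in_def)
  obtain t where "t \<in> T" "i \<in> {t, t+1}"
    using assms(2) T(2) by (auto simp: consecutive_in_def)
  then show "2 \<le> i" using T gap(1) by auto
  obtain t where "t \<in> T" "j \<in> {t, t+1}"
    using assms(2) T(2) by (auto simp: consecutive_in_def)
  then show "j \<le> n - 1" using T gap(2) by auto
qed

lemma optimal_slopes_monotone_or_constant:
  assumes opt: "optimal n M y eps z" and cons: "consecutive_in M i j"
    and "2 \<le> i" "i + 2 \<le> j" "j \<le> n - 1"
  defines "c \<equiv> (z j - z i) / (real j - real i)"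
  shows "(\<forall>k\<in>{i-1..<j}. \<forall>h\<in>{i-1..<j}.
            \<not> (slope z k < slope z (Suc k) \<and> slope z (Suc h) < slope z h))
         \<or> (\<forall>m\<in>{i..<j}. slope z m = c)"
proof -
  let ?w = "chord z i j"
  have "i < j" using assms by simp
  have "?w m = z m" if "m \<in> M" for m
    using cons that \<open>i < j\<close> by (intro chord_eq_outside) (auto simp: consecutive_in_def not_less)
  then have "feasible M y eps ?w"
    using opt by (auto simp: optimal_def feasible_def)
  then have "D_l1 n z \<le> D_l1 n ?w"
    using opt by (auto simp: optimal_def)
  moreover have "second_diff ?w k = second_diff z k" if "k \<notin> {i-1..<j}" for k
  proof -
    have "Suc k < i \<or> j \<le> k" using that by auto
    then show ?thesis
      using \<open>i < j\<close> slope_chord_outside[of i j k z] slope_chord_outside[of i j "Suc k" z]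
      by (auto simp: second_diff_eq_slope_diff)
  qed
  moreover have "{i-1..<j} \<subseteq> {1..n-2}" using assms by auto
  ultimately have "(\<Sum>k\<in>{i-1..<j}. \<bar>second_diff z k\<bar>) \<le> (\<Sum>k\<in>{i-1..<j}. \<bar>second_diff ?w k\<bar>)"
    by (intro local_variation_le_if_D_l1_le) auto
  also have "\<dots> = \<bar>c - slope z (i-1)\<bar> + \<bar>slope z j - c\<bar>"
    using variation_chord[of i j z] assms by (simp add: c_def)
  finally have "(\<Sum>k\<in>{i-1..<j}. \<bar>second_diff z k\<bar>) \<le> \<bar>c - slope z (i-1)\<bar> + \<bar>slope z j - c\<bar>" .
  moreover have "(\<Sum>m\<in>{i..<j}. slope z m) = real (j - i) * c"
    using \<open>i < j\<close> by (simp add: sum_slope c_def of_nat_diff)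
  ultimately show ?thesis
    using monotone_or_constant_if_variation_le[of "i-1" j "slope z" c] assms
    by (simp add: second_diff_eq_slope_diff Suc_diff_le)
qed

lemma sgn_curv_consistent_if_slopes_monotone_or_constant:
  fixes z :: "nat \<Rightarrow> real"
  assumes "1 \<le> i"
    and "(\<forall>k\<in>{i-1..<j}. \<forall>h\<in>{i-1..<j}.
            \<not> (slope z k < slope z (Suc k) \<and> slope z (Suc h) < slope z h))
         \<or> (\<forall>m\<in>{i..<j}. slope z m = c)"
  shows "(\<forall>k h. i \<le> k \<and> k \<le> j \<and> i \<le> h \<and> h \<le> j \<and>
            sgn_curv z k \<noteq> 0 \<and> sgn_curv z h \<noteq> 0 \<longrightarrow> sgn_curv z k = sgn_curv z h)
         \<or> (\<forall>k. i < k \<and> k < j \<longrightarrow> sgn_curv z k = 0)"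
  using assms(2)
proof
  assume mono: "\<forall>k\<in>{i-1..<j}. \<forall>h\<in>{i-1..<j}.
                  \<not> (slope z k < slope z (Suc k) \<and> slope z (Suc h) < slope z h)"
  have "sgn_curv z k = sgn_curv z h"
    if "i \<le> k" "k \<le> j" "i \<le> h" "h \<le> j" "sgn_curv z k \<noteq> 0" "sgn_curv z h \<noteq> 0" for k h
  proof -
    have "k - 1 \<in> {i-1..<j}" "h - 1 \<in> {i-1..<j}" "Suc (k-1) = k" "Suc (h-1) = h"
      using that assms(1) by auto
    then have "\<not> (slope z (k-1) < slope z k \<and> slope z h < slope z (h-1))"
      "\<not> (slope z (h-1) < slope z h \<and> slope z k < slope z (k-1))"
      using mono by metis+
    then show ?thesis
      using that assms(1) sgn_curv_eq_sgn_slope_diff[of k z] sgn_curv_eq_sgn_slope_diff[of h z]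
      by (auto simp: sgn_if split: if_splits)
  qed
  then show ?thesis by blast
next
  assume "\<forall>m\<in>{i..<j}. slope z m = c"
  moreover have "k - 1 \<in> {i..<j}" "k \<in> {i..<j}" if "i < k" "k < j" for k
    using that by auto
  ultimately have "sgn_curv z k = 0" if "i < k" "k < j" for k
    using that sgn_curv_eq_sgn_slope_diff[of k z] by auto
  then show ?thesis by blast
qed

theorem theorem3:
  fixes n :: nat and eps :: real and M :: "nat set" and y z :: "nat \<Rightarrow> real"
  assumes "n \<ge> 3" and "eps \<ge> 0"
    and "M \<subseteq> {1..n}" and "union_of_twins n M" and "1 \<in> M" and "n \<in> M"
    and "optimal n M y eps z"
  shows "sign_consistent n M z"
  unfolding sign_consistent_def
proof (intro allI impI)
  fix i j assume cons: "consecutive_in M i j"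
  consider "j = Suc i" | "i + 2 \<le> j"
    using cons by (force simp: consecutive_in_def)
  then show "(\<forall>k h. i \<le> k \<and> k \<le> j \<and> i \<le> h \<and> h \<le> j \<and>
               2 \<le> k \<and> k \<le> n - 1 \<and> 2 \<le> h \<and> h \<le> n - 1 \<and>
               sgn_curv z k \<noteq> 0 \<and> sgn_curv z h \<noteq> 0 \<longrightarrow> sgn_curv z k = sgn_curv z h)
       \<or> (\<forall>k. i < k \<and> k < j \<longrightarrow> sgn_curv z k = 0)"
  proof cases
    case 2
    note interior = consecutive_twin_samples_interior[OF assms(4) cons 2]
    have "1 \<le> i" using interior by simp
    from sgn_curv_consistent_if_slopes_monotone_or_constant[OF this
        optimal_slopes_monotone_or_constant[OF assms(7) cons interior(1) 2 interior(2)]]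
    show ?thesis by blast
  qed auto
qed

end
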